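(* On the square graph with vertices $0,1,2,3$ (in cyclic order) over $\mathbb{F}_2$ with exterior algebra $\Omega(\mathbb{Z}_4)$, the unique quantum metric $g=e^+\otimes e^-+e^-\otimes e^+$ has exactly four QLCs, namely for $\alpha,\beta\in\{0,1\}$: $\nabla e^+=\alpha\, e^-\otimes e^-+\alpha\beta(g+e^+\otimes e^+)$, $\nabla e^-=\beta\, e^+\otimes e^++\alpha\beta(g+e^-\otimes e^-)$, with $\sigma(e^+\otimes e^+)=(1+\alpha\beta)e^+\otimes e^++\alpha\, e^-\otimes e^-$, $\sigma(e^+\otimes e^-)=(1+\alpha\beta)e^-\otimes e^++\alpha\beta\, e^+\otimes e^-$, $\sigma(e^-\otimes e^-)=(1+\alpha\beta)e^-\otimes e^-+\beta\, e^+\otimes e^+$, $\sigma(e^-\otimes e^+)=(1+\alpha\beta)e^+\otimes e^-+\alpha\beta\, e^-\otimes e^+$. All four are flat.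
   Context: $A=\mathbb{F}_2(\mathbb{Z}_4)$; $(R_\pm f)(i)=f(i\pm1)$ mod 4. The square graph has arrows $i\to i\pm1$ mod 4, and the calculus has basis over $A$ given by $e^+=01+12+23+30$, $e^-=10+21+32+03$ (here $ij$ denotes the arrow $i\to j$), with $e^\pm f=(R_\pm f)e^\pm$ and ${\rm d} f=(R_+f+f)e^++(R_-f+f)e^-$; $\Omega^1\otimes_A\Omega^1$ is free with basis $e^a\otimes e^b$. $\Omega(\mathbb{Z}_4)$ is the exterior algebra generated by $A$ and $e^\pm$ with relations $(e^+)^2=(e^-)^2=0$, $e^+\wedge e^-+e^-\wedge e^+=0$, ${\rm d} e^\pm=0$. A bimodule connection is a linear $\nabla:\Omega^1\to\Omega^1\otimes_A\Omega^1$ with $\nabla(f\omega)={\rm d} f\otimes\omega+f\nabla\omega$ and $\nabla(\omega f)=(\nabla\omega)f+\sigma(\omega\otimes{\rm d} f)$ for a bimodule map $\sigma$; it is a QLC if $T_\nabla=\wedge\nabla-{\rm d}=0$ and $(\nabla\otimes\mathrm{id}+(\sigma\otimes\mathrm{id})(\mathrm{id}\otimes\nabla))g=0$. Flat means curvature $R_\nabla=({\rm d}\otimes\mathrm{id}-(\wedge\otimes\mathrm{id})(\mathrm{id}\otimes\nabla))\nabla$ vanishes. *)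

theory Defs
  imports Main "HOL-Library.Z2" "HOL-Library.Numeral_Type" "HOL-Library.Function_Algebras"
begin

text \<open>Omega^1 is free as a left A-module on e+, e-; an element sum_a f_a e^a is stored
  as its left coefficient function (pm => A). Likewise Omega^1 (x)_A Omega^1 has
  left basis e^a (x) e^b, Omega^1 (x) Omega^1 (x) Omega^1 has left basis
  e^a (x) e^b (x) e^c, Omega^2 has left basis e+ /\ e- (so Omega^2 = A), and
  Omega^2 (x)_A Omega^1 has left basis (e+ /\ e-) (x) e^c.\<close>

datatype pm = Pl | Mi

type_synonym alg = "4 \<Rightarrow> bit"
type_synonym om1 = "pm \<Rightarrow> alg"
type_synonym om11 = "pm \<Rightarrow> pm \<Rightarrow> alg"
type_synonym om111 = "pm \<Rightarrow> pm \<Rightarrow> pm \<Rightarrow> alg"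
type_synonym om2 = "alg"
type_synonym om21 = "pm \<Rightarrow> alg"

fun sh :: "pm \<Rightarrow> 4" where
  "sh Pl = 1" | "sh Mi = -1"

definition R :: "pm \<Rightarrow> alg \<Rightarrow> alg" where
  "R a f = (\<lambda>i. f (i + sh a))"

definition e :: "pm \<Rightarrow> om1" where
  "e a = (\<lambda>b i. if a = b then 1 else 0)"

definition dA :: "alg \<Rightarrow> om1" where
  "dA f = (\<lambda>b i. R b f i + f i)"

text \<open>bimodule structures, using e^a f = (R_a f) e^a\<close>
definition lmul1 :: "alg \<Rightarrow> om1 \<Rightarrow> om1" where
  "lmul1 f w = (\<lambda>a i. f i * w a i)"
definition rmul1 :: "om1 \<Rightarrow> alg \<Rightarrow> om1" where
  "rmul1 w f = (\<lambda>a i. w a i * f (i + sh a))"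
definition lmul2 :: "alg \<Rightarrow> om11 \<Rightarrow> om11" where
  "lmul2 f x = (\<lambda>a b i. f i * x a b i)"
definition rmul2 :: "om11 \<Rightarrow> alg \<Rightarrow> om11" where
  "rmul2 x f = (\<lambda>a b i. x a b i * f (i + sh a + sh b))"

definition tens11 :: "om1 \<Rightarrow> om1 \<Rightarrow> om11" where
  "tens11 w v = (\<lambda>a b i. w a i * v b (i + sh a))"
definition tens21 :: "om11 \<Rightarrow> om1 \<Rightarrow> om111" where
  "tens21 x v = (\<lambda>a b c i. x a b i * v c (i + sh a + sh b))"
definition tens12 :: "om1 \<Rightarrow> om11 \<Rightarrow> om111" where
  "tens12 w y = (\<lambda>a b c i. w a i * y b c (i + sh a))"
definition tens2_1 :: "om2 \<Rightarrow> om1 \<Rightarrow> om21" where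
  "tens2_1 t v = (\<lambda>c i. t i * v c (i + sh Pl + sh Mi))"

text \<open>wedge product Omega^1 (x) Omega^1 -> Omega^2 in the exterior algebra:
  (e^a)^2 = 0 and e^- /\ e^+ = - e^+ /\ e^- = e^+ /\ e^- (characteristic 2)\<close>
definition wedge11 :: "om11 \<Rightarrow> om2" where
  "wedge11 x = (\<lambda>i. x Pl Mi i + x Mi Pl i)"
definition wedge_id :: "om111 \<Rightarrow> om21" where
  "wedge_id z = (\<lambda>c i. z Pl Mi c i + z Mi Pl c i)"

text \<open>exterior derivative on 1-forms: d(sum_a f_a e^a) = sum_a d f_a /\ e^a (since d e^a = 0)\<close>
definition d1 :: "om1 \<Rightarrow> om2" where
  "d1 w = wedge11 (tens11 (dA (w Pl)) (e Pl)) + wedge11 (tens11 (dA (w Mi)) (e Mi))"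

definition sig_id :: "(om11 \<Rightarrow> om11) \<Rightarrow> om111 \<Rightarrow> om111" where
  "sig_id S z = (\<lambda>a b c. S (\<lambda>a' b'. z a' b' c) a b)"

definition bimod_map :: "(om11 \<Rightarrow> om11) \<Rightarrow> bool" where
  "bimod_map S \<longleftrightarrow> (\<forall>x y. S (x + y) = S x + S y)
     \<and> (\<forall>f x. S (lmul2 f x) = lmul2 f (S x))
     \<and> (\<forall>f x. S (rmul2 x f) = rmul2 (S x) f)"

definition bimod_conn :: "(om1 \<Rightarrow> om11) \<Rightarrow> (om11 \<Rightarrow> om11) \<Rightarrow> bool" where
  "bimod_conn N S \<longleftrightarrow> (\<forall>w v. N (w + v) = N w + N v)
     \<and> (\<forall>f w. N (lmul1 f w) = tens11 (dA f) w + lmul2 f (N w))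
     \<and> (\<forall>w f. N (rmul1 w f) = rmul2 (N w) f + S (tens11 w (dA f)))
     \<and> bimod_map S"

definition torsion_free :: "(om1 \<Rightarrow> om11) \<Rightarrow> bool" where
  "torsion_free N \<longleftrightarrow> (\<forall>w. wedge11 (N w) - d1 w = 0)"

text \<open>(N (x) id + (S (x) id)(id (x) N)) g, using g = sum_b (sum_a g_ab e^a) (x) e^b\<close>
definition metric_term :: "(om1 \<Rightarrow> om11) \<Rightarrow> (om11 \<Rightarrow> om11) \<Rightarrow> om11 \<Rightarrow> om111" where
  "metric_term N S g =
     (tens21 (N (\<lambda>a. g a Pl)) (e Pl) + sig_id S (tens12 (\<lambda>a. g a Pl) (N (e Pl))))
   + (tens21 (N (\<lambda>a. g a Mi)) (e Mi) + sig_id S (tens12 (\<lambda>a. g a Mi) (N (e Mi))))"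

definition is_QLC :: "om11 \<Rightarrow> (om1 \<Rightarrow> om11) \<Rightarrow> (om11 \<Rightarrow> om11) \<Rightarrow> bool" where
  "is_QLC g N S \<longleftrightarrow> bimod_conn N S \<and> torsion_free N \<and> metric_term N S g = 0"

text \<open>(d (x) id - (wedge (x) id)(id (x) N)) applied to x = sum_b (sum_a x_ab e^a) (x) e^b\<close>
definition curv_op :: "(om1 \<Rightarrow> om11) \<Rightarrow> om11 \<Rightarrow> om21" where
  "curv_op N x =
     (tens2_1 (d1 (\<lambda>a. x a Pl)) (e Pl) - wedge_id (tens12 (\<lambda>a. x a Pl) (N (e Pl))))
   + (tens2_1 (d1 (\<lambda>a. x a Mi)) (e Mi) - wedge_id (tens12 (\<lambda>a. x a Mi) (N (e Mi))))"

definition curvature :: "(om1 \<Rightarrow> om11) \<Rightarrow> om1 \<Rightarrow> om21" where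
  "curvature N w = curv_op N (N w)"

definition flat :: "(om1 \<Rightarrow> om11) \<Rightarrow> bool" where
  "flat N \<longleftrightarrow> (\<forall>w. curvature N w = 0)"

text \<open>quantum metric: central, quantum symmetric (wedge g = 0), nondegenerate
  (there is a bimodule map ( , ) : Omega^1 (x) Omega^1 -> A with
   ((w, g1)) g2 = w = g1 (g2, w))\<close>
definition bimod_map_A :: "(om11 \<Rightarrow> alg) \<Rightarrow> bool" where
  "bimod_map_A P \<longleftrightarrow> (\<forall>x y. P (x + y) = P x + P y)
     \<and> (\<forall>f x. P (lmul2 f x) = f * P x)
     \<and> (\<forall>f x. P (rmul2 x f) = P x * f)"

definition pair_id :: "(om11 \<Rightarrow> alg) \<Rightarrow> om111 \<Rightarrow> om1" where
  "pair_id P z = (\<lambda>c. P (\<lambda>a b. z a b c))"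

definition id_pair :: "(om11 \<Rightarrow> alg) \<Rightarrow> om111 \<Rightarrow> om1" where
  "id_pair P z = (\<lambda>a i. P (\<lambda>b c j. z a b c (j - sh a)) (i + sh a))"

definition is_qmetric :: "om11 \<Rightarrow> bool" where
  "is_qmetric g \<longleftrightarrow> (\<forall>f. lmul2 f g = rmul2 g f) \<and> wedge11 g = 0
     \<and> (\<exists>P. bimod_map_A P \<and> (\<forall>w. pair_id P (tens12 w g) = w \<and> id_pair P (tens21 g w) = w))"

definition gmet :: om11 where
  "gmet = tens11 (e Pl) (e Mi) + tens11 (e Mi) (e Pl)"

definition smul :: "bit \<Rightarrow> om11 \<Rightarrow> om11" where
  "smul c x = (\<lambda>a b i. c * x a b i)"

definition ee :: "pm \<Rightarrow> pm \<Rightarrow> om11" where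
  "ee a b = tens11 (e a) (e b)"

fun nablaE :: "bit \<Rightarrow> bit \<Rightarrow> pm \<Rightarrow> om11" where
  "nablaE \<alpha> \<beta> Pl = smul \<alpha> (ee Mi Mi) + smul (\<alpha> * \<beta>) (gmet + ee Pl Pl)"
| "nablaE \<alpha> \<beta> Mi = smul \<beta> (ee Pl Pl) + smul (\<alpha> * \<beta>) (gmet + ee Mi Mi)"

text \<open>extended to all 1-forms by the left Leibniz rule\<close>
definition nab :: "bit \<Rightarrow> bit \<Rightarrow> om1 \<Rightarrow> om11" where
  "nab \<alpha> \<beta> w =
     (tens11 (dA (w Pl)) (e Pl) + lmul2 (w Pl) (nablaE \<alpha> \<beta> Pl))
   + (tens11 (dA (w Mi)) (e Mi) + lmul2 (w Mi) (nablaE \<alpha> \<beta> Mi))"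

fun sigE :: "bit \<Rightarrow> bit \<Rightarrow> pm \<Rightarrow> pm \<Rightarrow> om11" where
  "sigE \<alpha> \<beta> Pl Pl = smul (1 + \<alpha> * \<beta>) (ee Pl Pl) + smul \<alpha> (ee Mi Mi)"
| "sigE \<alpha> \<beta> Pl Mi = smul (1 + \<alpha> * \<beta>) (ee Mi Pl) + smul (\<alpha> * \<beta>) (ee Pl Mi)"
| "sigE \<alpha> \<beta> Mi Mi = smul (1 + \<alpha> * \<beta>) (ee Mi Mi) + smul \<beta> (ee Pl Pl)"
| "sigE \<alpha> \<beta> Mi Pl = smul (1 + \<alpha> * \<beta>) (ee Pl Mi) + smul (\<alpha> * \<beta>) (ee Mi Pl)"

definition sig :: "bit \<Rightarrow> bit \<Rightarrow> om11 \<Rightarrow> om11" where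
  "sig \<alpha> \<beta> x =
     lmul2 (x Pl Pl) (sigE \<alpha> \<beta> Pl Pl) + lmul2 (x Pl Mi) (sigE \<alpha> \<beta> Pl Mi)
   + lmul2 (x Mi Mi) (sigE \<alpha> \<beta> Mi Mi) + lmul2 (x Mi Pl) (sigE \<alpha> \<beta> Mi Pl)"

end

theory Submission
  imports Defs
begin

text \<open>
  Since \<open>\<Omega>\<^sup>1\<close> and \<open>\<Omega>\<^sup>1 \<otimes>\<^sub>A \<Omega>\<^sup>1\<close> are free left \<open>A\<close>-modules on \<open>e\<^sup>\<plusminus>\<close> and
  \<open>e\<^sup>a \<otimes> e\<^sup>b\<close>, a bimodule connection is determined by \<open>\<nabla>e\<^sup>\<plusminus>\<close> and \<open>\<sigma>\<close> by its values
  on the \<open>e\<^sup>a \<otimes> e\<^sup>b\<close>. The right Leibniz rule, evaluated on Kronecker deltas, expresses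
  \<open>\<sigma>\<close> through \<open>\<nabla>e\<^sup>a\<close>; torsion freeness says \<open>\<wedge>\<nabla>e\<^sup>a = 0\<close> because \<open>de\<^sup>a = 0\<close>;
  metric compatibility then leaves exactly the two free coefficients \<open>\<alpha>\<close> of
  \<open>e\<^sup>- \<otimes> e\<^sup>-\<close> in \<open>\<nabla>e\<^sup>+\<close> and \<open>\<beta>\<close> of \<open>e\<^sup>+ \<otimes> e\<^sup>+\<close> in \<open>\<nabla>e\<^sup>-\<close>. For the metric,
  centrality kills the \<open>e\<^sup>a \<otimes> e\<^sup>a\<close> components (the shift by \<open>2a\<close> is nontrivial on
  \<open>\<int>\<^sub>4\<close>), quantum symmetry equates the two mixed ones, and nondegeneracy makes the
  remaining coefficient a unit of \<open>A\<close>, i.e. the constant \<open>1\<close>. All remaining identities are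
  finite computations over \<open>\<bbbF>\<^sub>2\<close> at four points, decided by reading \<open>\<bbbF>\<^sub>2\<close>-equations
  as parity statements and these as propositional formulas.
\<close>

lemma UNIV_4: "(UNIV :: 4 set) = {0, 1, 2, 3}"
proof -
  have "x \<in> {0, 1, 2, 3}" for x :: 4
  proof (cases x)
    case (of_int z)
    then have "z = 0 \<or> z = 1 \<or> z = 2 \<or> z = 3" by auto
    then show ?thesis using of_int by auto
  qed
  then show ?thesis by auto
qed

lemma all_4_iff: "(\<forall>i :: 4. P i) \<longleftrightarrow> P 0 \<and> P 1 \<and> P 2 \<and> P 3"
  by (metis UNIV_4 UNIV_I insertE empty_iff)

lemma all_pm_iff: "(\<forall>a. P a) \<longleftrightarrow> P Pl \<and> P Mi"
  by (metis pm.exhaust)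

lemma numerals_mod_4 [simp]:
  "(4 :: 4) = 0" "(5 :: 4) = 1" "(6 :: 4) = 2" "(7 :: 4) = 3" "(8 :: 4) = 0" "(9 :: 4) = 1"
  "(-1 :: 4) = 3" "(-2 :: 4) = 2" "(-3 :: 4) = 1" "(-4 :: 4) = 0" "(-5 :: 4) = 3" "(-6 :: 4) = 2"
  by simp_all

text \<open>Keep \<open>+\<close> and \<open>*\<close> on \<open>bit\<close> as ring operations rather than \<open>xor\<close>/\<open>and\<close>, so that
  \<open>bit_parity_simps\<close> turns equations over \<open>\<bbbF>\<^sub>2\<close> into propositional formulas for \<open>sat\<close>.\<close>

declare add_bit_eq_xor [simp del] mult_bit_eq_and [simp del]

lemmas bit_parity_simps = Z2.bit_eq_iff even_add even_mult_iff even_zero odd_one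

definition delta :: "4 \<Rightarrow> alg" where
  "delta j = (\<lambda>i. if i = j then 1 else 0)"

lemmas calculus_simps = delta_def R_def e_def dA_def lmul1_def rmul1_def
  lmul2_def rmul2_def tens11_def tens21_def tens12_def tens2_1_def wedge11_def wedge_id_def
  d1_def sig_id_def gmet_def smul_def ee_def nab_def sig_def

lemma bimod_conn_nab: "bimod_conn (nab \<alpha> \<beta>) (sig \<alpha> \<beta>)"
  unfolding bimod_conn_def bimod_map_def fun_eq_iff all_pm_iff all_4_iff
  by (cases \<alpha>; cases \<beta>; intro conjI allI; simp add: calculus_simps;
      (simp only: bit_parity_simps)?; sat)

lemma wedge_nab: "wedge11 (nab \<alpha> \<beta> w) = d1 w"
  unfolding fun_eq_iff all_4_iff
  by (cases \<alpha>; cases \<beta>; intro conjI; simp add: calculus_simps;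
      (simp only: bit_parity_simps)?; sat)

lemma metric_term_nab_gmet: "metric_term (nab \<alpha> \<beta>) (sig \<alpha> \<beta>) gmet = 0"
  unfolding metric_term_def fun_eq_iff all_pm_iff all_4_iff
  by (cases \<alpha>; cases \<beta>; intro conjI; simp add: calculus_simps;
      (simp only: bit_parity_simps)?; sat)

lemma is_QLC_nab: "is_QLC gmet (nab \<alpha> \<beta>) (sig \<alpha> \<beta>)"
  unfolding is_QLC_def torsion_free_def
  by (simp add: bimod_conn_nab wedge_nab metric_term_nab_gmet)

lemma flat_nab: "flat (nab \<alpha> \<beta>)"
  unfolding flat_def curvature_def curv_op_def fun_eq_iff all_pm_iff all_4_iff
  by (cases \<alpha>; cases \<beta>; intro allI conjI; simp add: calculus_simps;
      (simp only: bit_parity_simps)?; sat)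

lemma nab_e_coefficients: "nab \<alpha> \<beta> (e Pl) Mi Mi 0 = \<alpha>" "nab \<alpha> \<beta> (e Mi) Pl Pl 0 = \<beta>"
  by (cases \<alpha>; cases \<beta>; simp add: calculus_simps)+

lemma UNIV_bit: "(UNIV :: bit set) = {0, 1}"
  using bit.exhaust by auto

lemma card_nab_sig: "card {(nab \<alpha> \<beta>, sig \<alpha> \<beta>) | \<alpha> \<beta>. True} = 4"
proof -
  let ?F = "\<lambda>(\<alpha>, \<beta>). (nab \<alpha> \<beta>, sig \<alpha> \<beta>)"
  have "inj ?F"
    unfolding inj_def by (auto, metis nab_e_coefficients(1), metis nab_e_coefficients(2))
  then have "card (range ?F) = card (UNIV :: (bit \<times> bit) set)"
    by (rule card_image)
  also have "\<dots> = 4"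
    by (simp add: UNIV_Times_UNIV[symmetric] card_cartesian_product UNIV_bit del: UNIV_Times_UNIV)
  also have "range ?F = {(nab \<alpha> \<beta>, sig \<alpha> \<beta>) | \<alpha> \<beta>. True}"
    by auto
  finally show ?thesis .
qed

lemma central_diagonal_zero:
  assumes "\<forall>f. lmul2 f x = rmul2 x f"
  shows "x a a = 0"
proof -
  have "x a a i = 0" for i
  proof -
    have "lmul2 (delta i) x a a i = rmul2 x (delta i) a a i"
      using assms by simp
    moreover have "delta i (i + sh a + sh a) = 0"
      by (cases a) (simp_all add: delta_def)
    ultimately show ?thesis
      by (simp add: lmul2_def rmul2_def delta_def)
  qed
  then show ?thesis
    by (simp add: fun_eq_iff)
qed

lemma is_qmetric_gmet: "is_qmetric gmet"
  unfolding is_qmetric_def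
proof (intro conjI allI exI)
  show "lmul2 f gmet = rmul2 gmet f" for f
    unfolding fun_eq_iff all_pm_iff all_4_iff by (simp add: calculus_simps)
  show "wedge11 gmet = 0"
    unfolding fun_eq_iff all_4_iff by (simp add: calculus_simps)
  let ?P = "\<lambda>x i. x Mi Pl i + x Pl Mi i"
  show "bimod_map_A ?P"
    unfolding bimod_map_A_def by (simp add: lmul2_def rmul2_def fun_eq_iff algebra_simps)
  show "pair_id ?P (tens12 w gmet) = w" for w
    unfolding pair_id_def fun_eq_iff all_pm_iff all_4_iff by (simp add: calculus_simps)
  show "id_pair ?P (tens21 gmet w) = w" for w
    unfolding id_pair_def fun_eq_iff all_pm_iff all_4_iff by (simp add: calculus_simps)
qed

lemma is_qmetric_imp_gmet:
  assumes "is_qmetric g"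
  shows "g = gmet"
proof -
  obtain P where central: "\<forall>f. lmul2 f g = rmul2 g f" and symmetric: "wedge11 g = 0"
    and P: "bimod_map_A P" and left_inverse: "\<And>w. pair_id P (tens12 w g) = w"
    using assms unfolding is_qmetric_def by blast
  have diagonal: "g a a = 0" for a
    using central by (rule central_diagonal_zero)
  define h where "h i = g Mi Pl (i + 1)" for i
  have "(\<lambda>a b. tens12 (e Pl) g a b Pl) = lmul2 h (ee Pl Mi)"
    using diagonal[of Pl] diagonal[of Mi]
    by (simp add: calculus_simps fun_eq_iff all_pm_iff all_4_iff h_def)
  moreover have "pair_id P (tens12 (e Pl) g) Pl = 1"
    using left_inverse[of "e Pl"] by (simp add: e_def fun_eq_iff)
  ultimately have "h * P (ee Pl Mi) = 1"
    using P by (simp add: pair_id_def bimod_map_A_def)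
  then have "h i = 1" for i
    by (metis times_fun_apply one_fun_apply mult_zero_left bit_not_one_iff zero_neq_one)
  then have "g Mi Pl = 1"
    by (metis h_def diff_add_cancel one_fun_apply ext)
  moreover have "g Pl Mi = g Mi Pl"
    using symmetric by (simp add: wedge11_def fun_eq_iff add_eq_0_iff)
  ultimately show ?thesis
    using diagonal[of Pl] diagonal[of Mi]
    by (simp add: calculus_simps fun_eq_iff all_pm_iff all_4_iff)
qed

lemma d1_e: "d1 (e a) = 0"
  unfolding fun_eq_iff all_4_iff by (cases a) (simp_all add: calculus_simps)

lemma om1_basis_expansion: "w = lmul1 (w Pl) (e Pl) + lmul1 (w Mi) (e Mi)"
  unfolding fun_eq_iff all_pm_iff by (simp add: calculus_simps)

lemma om11_basis_expansion:
  "x = lmul2 (x Pl Pl) (ee Pl Pl) + lmul2 (x Pl Mi) (ee Pl Mi)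
     + lmul2 (x Mi Mi) (ee Mi Mi) + lmul2 (x Mi Pl) (ee Mi Pl)"
  unfolding fun_eq_iff all_pm_iff by (simp add: calculus_simps)

lemma bimod_conn_basis_expansion:
  assumes "bimod_conn N S"
  shows "N w = (tens11 (dA (w Pl)) (e Pl) + lmul2 (w Pl) (N (e Pl)))
             + (tens11 (dA (w Mi)) (e Mi) + lmul2 (w Mi) (N (e Mi)))"
proof -
  have "N w = N (lmul1 (w Pl) (e Pl) + lmul1 (w Mi) (e Mi))"
    by (subst om1_basis_expansion) (rule refl)
  then show ?thesis
    using assms unfolding bimod_conn_def by simp
qed

lemma bimod_map_basis_expansion:
  assumes "bimod_map S"
  shows "S x = lmul2 (x Pl Pl) (S (ee Pl Pl)) + lmul2 (x Pl Mi) (S (ee Pl Mi))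
             + lmul2 (x Mi Mi) (S (ee Mi Mi)) + lmul2 (x Mi Pl) (S (ee Mi Pl))"
proof -
  have "S x = S (lmul2 (x Pl Pl) (ee Pl Pl) + lmul2 (x Pl Mi) (ee Pl Mi)
                + lmul2 (x Mi Mi) (ee Mi Mi) + lmul2 (x Mi Pl) (ee Mi Pl))"
    by (subst om11_basis_expansion) (rule refl)
  then show ?thesis
    using assms unfolding bimod_map_def by simp
qed

lemma bimod_conn_sigma_basis:
  assumes "bimod_conn N S"
  shows "S (ee a c) = (\<lambda>b d i. (if b = c \<and> d = a then 1 else 0)
           + (if sh b + sh d = sh a + sh c then N (e a) b d i else 0))"
proof -
  \<comment> \<open>Opaque names, so that unfolding \<open>e\<close> and \<open>ee\<close> below does not reach inside them.\<close>
  define G where "G a = N (e a)" for a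
  define s where "s a c = S (ee a c)" for a c
  have "bimod_map S"
    using assms unfolding bimod_conn_def by blast
  have N_expansion: "N w = (tens11 (dA (w Pl)) (e Pl) + lmul2 (w Pl) (G Pl))
                         + (tens11 (dA (w Mi)) (e Mi) + lmul2 (w Mi) (G Mi))" for w
    unfolding G_def by (rule bimod_conn_basis_expansion[OF assms])
  have S_expansion: "S x = lmul2 (x Pl Pl) (s Pl Pl) + lmul2 (x Pl Mi) (s Pl Mi)
                         + lmul2 (x Mi Mi) (s Mi Mi) + lmul2 (x Mi Pl) (s Mi Pl)" for x
    unfolding s_def by (rule bimod_map_basis_expansion[OF \<open>bimod_map S\<close>])
  have "N (rmul1 (e a) f) = rmul2 (G a) f + S (tens11 (e a) (dA f))" for a f
    using assms unfolding bimod_conn_def G_def by blast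
  note right_leibniz = this[unfolded N_expansion S_expansion]
  note at_deltas = right_leibniz[of Pl "delta 0"] right_leibniz[of Pl "delta 1"]
    right_leibniz[of Pl "delta 2"] right_leibniz[of Pl "delta 3"]
    right_leibniz[of Mi "delta 0"] right_leibniz[of Mi "delta 1"]
    right_leibniz[of Mi "delta 2"] right_leibniz[of Mi "delta 3"]
  note evaluated = at_deltas[unfolded fun_eq_iff all_pm_iff all_4_iff calculus_simps, simplified]
  have "\<forall>a c b d i. s a c b d i = (if b = c \<and> d = a then 1 else 0)
           + (if sh b + sh d = sh a + sh c then G a b d i else 0)"
    unfolding all_pm_iff all_4_iff
    by (intro conjI; simp; insert evaluated; (simp only: bit_parity_simps)?; sat)
  then show ?thesis
    by (simp add: fun_eq_iff s_def G_def)
qed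

lemma torsion_free_wedge_basis:
  assumes "torsion_free N"
  shows "wedge11 (N (e a)) = 0"
  using assms d1_e[of a] unfolding torsion_free_def by (metis diff_zero)

lemma is_QLC_gmet_basis_values:
  assumes "is_QLC gmet N S"
  shows "N (e a) = nablaE (N (e Pl) Mi Mi 0) (N (e Mi) Pl Pl 0) a"
proof -
  define G where "G a = N (e a)" for a
  define s where "s a c = S (ee a c)" for a c
  have conn: "bimod_conn N S" and "torsion_free N" and metric: "metric_term N S gmet = 0"
    using assms unfolding is_QLC_def by auto
  then have "bimod_map S"
    unfolding bimod_conn_def by blast
  have S_expansion: "S x = lmul2 (x Pl Pl) (s Pl Pl) + lmul2 (x Pl Mi) (s Pl Mi)
                         + lmul2 (x Mi Mi) (s Mi Mi) + lmul2 (x Mi Pl) (s Mi Pl)" for x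
    unfolding s_def by (rule bimod_map_basis_expansion[OF \<open>bimod_map S\<close>])
  have sigma: "s a c b d i = (if b = c \<and> d = a then 1 else 0)
                 + (if sh b + sh d = sh a + sh c then G a b d i else 0)" for a c b d i
    unfolding s_def G_def bimod_conn_sigma_basis[OF conn] by simp
  have "(\<lambda>a. gmet a Pl) = e Mi" and "(\<lambda>a. gmet a Mi) = e Pl"
    unfolding fun_eq_iff all_pm_iff by (simp_all add: calculus_simps)
  note metric_evaluated = metric[unfolded metric_term_def this G_def[symmetric] sig_id_def
      S_expansion, unfolded fun_eq_iff all_pm_iff all_4_iff calculus_simps,
      simplified, simplified sigma, simplified]
  have "wedge11 (G Pl) = 0" "wedge11 (G Mi) = 0"
    using torsion_free_wedge_basis[OF \<open>torsion_free N\<close>] by (simp_all add: G_def)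
  note wedge_evaluated = this[unfolded fun_eq_iff all_4_iff wedge11_def, simplified]
  have "G b = nablaE (G Pl Mi Mi 0) (G Mi Pl Pl 0) b" for b
    unfolding fun_eq_iff all_pm_iff all_4_iff
    by (cases b; intro conjI; simp add: calculus_simps; insert metric_evaluated wedge_evaluated;
        (simp only: bit_parity_simps)?; sat)
  then show ?thesis
    unfolding G_def .
qed

lemma is_QLC_gmet_imp_nab_sig:
  assumes "is_QLC gmet N S"
  shows "\<exists>\<alpha> \<beta>. N = nab \<alpha> \<beta> \<and> S = sig \<alpha> \<beta>"
proof (intro exI conjI)
  define \<alpha> where "\<alpha> = N (e Pl) Mi Mi 0"
  define \<beta> where "\<beta> = N (e Mi) Pl Pl 0"
  have conn: "bimod_conn N S"
    using assms unfolding is_QLC_def by blast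
  then have "bimod_map S"
    unfolding bimod_conn_def by blast
  have basis_values: "N (e a) = nablaE \<alpha> \<beta> a" for a
    unfolding \<alpha>_def \<beta>_def by (rule is_QLC_gmet_basis_values[OF assms])
  show "N = nab \<alpha> \<beta>"
  proof
    show "N w = nab \<alpha> \<beta> w" for w
      by (subst bimod_conn_basis_expansion[OF conn]) (simp only: basis_values nab_def)
  qed
  have "S (ee a c) = sigE \<alpha> \<beta> a c" for a c
    unfolding bimod_conn_sigma_basis[OF conn] basis_values fun_eq_iff all_pm_iff all_4_iff
    by (cases a; cases c; intro conjI; simp add: calculus_simps;
        (simp only: bit_parity_simps)?; sat)
  then show "S = sig \<alpha> \<beta>"
    by (intro ext) (subst bimod_map_basis_expansion[OF \<open>bimod_map S\<close>], simp only: sig_def)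
qed

theorem proposition4p6:
  shows "(\<forall>g. is_qmetric g \<longleftrightarrow> g = gmet)
    \<and> {(N, S). is_QLC gmet N S} = {(nab \<alpha> \<beta>, sig \<alpha> \<beta>) | \<alpha> \<beta>. True}
    \<and> card {(nab \<alpha> \<beta>, sig \<alpha> \<beta>) | \<alpha> \<beta>. True} = 4
    \<and> (\<forall>\<alpha> \<beta>. flat (nab \<alpha> \<beta>))"
proof (intro conjI)
  show "\<forall>g. is_qmetric g \<longleftrightarrow> g = gmet"
    using is_qmetric_gmet is_qmetric_imp_gmet by blast
  show "{(N, S). is_QLC gmet N S} = {(nab \<alpha> \<beta>, sig \<alpha> \<beta>) | \<alpha> \<beta>. True}"
    using is_QLC_gmet_imp_nab_sig is_QLC_nab by blast
  show "card {(nab \<alpha> \<beta>, sig \<alpha> \<beta>) | \<alpha> \<beta>. True} = 4"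
    by (rule card_nab_sig)
  show "\<forall>\<alpha> \<beta>. flat (nab \<alpha> \<beta>)"
    using flat_nab by blast
qed

end
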